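(* In the setting below, fix $w^0\in W$ and define $\Phi(w)=-\int_{w^0}^{w}\sum_{i=1}^nB_i\,dw_i$ for $w\in W$ (the integral is independent of the path in $W$ since the 1-form $\sum_i B_i\,dw_i$ is closed and $W$ is convex). Then $\Phi$ is a strictly convex function on $W$.
   Context: Setting: $T^*$ is a triangulation of a closed surface $S$ with vertex set $T^0$; $\Sigma=S\setminus N(T^0)$ where $N(T^0)$ is a small open regular disjoint neighborhood of $T^0$; $\Sigma$ has boundary components labeled $1,\dots,n$. $T=T^*\cap\Sigma$ is the ideal triangulation with ideal edges $E$ and ideal faces $F$; $ij$ denotes the ideal edge between boundary components $i,j$ and $ijk$ the ideal face adjacent to boundary components $i,j,k$. $\theta_i^f$ is the length of the side of the right-angled hyperbolic hexagon of face $f=ijk$ (pairwise non-adjacent sides of lengths $l_{ij},l_{jk},l_{ki}$) opposite to the side of length $l_{jk}$, i.e. $\cosh\theta_i^f=\frac{\cosh l_{jk}+\cosh l_{ki}\cosh l_{ij}}{\sinh l_{ki}\sinh l_{ij}}$. Fix $l^0\in\mathbb{R}_+^{|E|}$. $W=\{w\in\mathbb{R}^n: w_i+w_j>-\ln\cosh\frac{l^0_{ij}}{2}\ \forall ij\in E\}$; for $w\in W$, $\cosh\frac{l_{ij}}{2}=e^{w_i+w_j}\cosh\frac{l^0_{ij}}{2}$, and $B_i(w)=\sum_{f\in F_i}\theta_i^f$, where $F_i$ is the set of faces adjacent to boundary component $i$. *)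

theory Defs
  imports "HOL-Analysis.Analysis"
begin

definition strictly_convex_on :: "'a::real_vector set \<Rightarrow> ('a \<Rightarrow> real) \<Rightarrow> bool" where
  "strictly_convex_on S f \<longleftrightarrow>
     (\<forall>x\<in>S. \<forall>y\<in>S. \<forall>t. x \<noteq> y \<longrightarrow> 0 < t \<longrightarrow> t < 1 \<longrightarrow>
        f ((1 - t) *\<^sub>R x + t *\<^sub>R y) < (1 - t) * f x + t * f y)"

(* Combinatorial data of the ideal triangulation T of Sigma:
   boundary components = elements of the finite type 'v (i.e. 1..n);
   ideal edges E (edge e joins boundary components ea e and eb e, possibly equal);
   ideal faces F.  Face f has sides  side f k  (k = 0,1,2) and corners
   corner f k ; corner k is the boundary component opposite to side k, and
   side k joins corners k+1 and k+2 (mod 3). *)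
definition ideal_triangulation ::
  "'e set \<Rightarrow> 'f set \<Rightarrow> ('e \<Rightarrow> 'v) \<Rightarrow> ('e \<Rightarrow> 'v) \<Rightarrow> ('f \<Rightarrow> nat \<Rightarrow> 'e) \<Rightarrow> ('f \<Rightarrow> nat \<Rightarrow> 'v) \<Rightarrow> bool" where
  "ideal_triangulation E F ea eb side corner \<longleftrightarrow>
     finite E \<and> finite F \<and>
     (\<forall>f\<in>F. \<forall>k<3. side f k \<in> E \<and>
         {ea (side f k), eb (side f k)} = {corner f ((k + 1) mod 3), corner f ((k + 2) mod 3)}) \<and>
     (\<forall>e\<in>E. card {(f, k). f \<in> F \<and> k < 3 \<and> side f k = e} = 2) \<and>
     (\<forall>i. \<exists>f\<in>F. \<exists>k<3. corner f k = i)"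

definition Wdom :: "'e set \<Rightarrow> ('e \<Rightarrow> 'v) \<Rightarrow> ('e \<Rightarrow> 'v) \<Rightarrow> ('e \<Rightarrow> real) \<Rightarrow> (real^'v::finite) set" where
  "Wdom E ea eb l0 = {w. \<forall>e\<in>E. w $ ea e + w $ eb e > - ln (cosh (l0 e / 2))}"

definition edge_len :: "('e \<Rightarrow> 'v) \<Rightarrow> ('e \<Rightarrow> 'v) \<Rightarrow> ('e \<Rightarrow> real) \<Rightarrow> real^'v::finite \<Rightarrow> 'e \<Rightarrow> real" where
  "edge_len ea eb l0 w e = 2 * arcosh (exp (w $ ea e + w $ eb e) * cosh (l0 e / 2))"

definition theta :: "('e \<Rightarrow> 'v) \<Rightarrow> ('e \<Rightarrow> 'v) \<Rightarrow> ('e \<Rightarrow> real) \<Rightarrow> ('f \<Rightarrow> nat \<Rightarrow> 'e)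
                       \<Rightarrow> real^'v::finite \<Rightarrow> 'f \<Rightarrow> nat \<Rightarrow> real" where
  "theta ea eb l0 side w f k =
     (let L = edge_len ea eb l0 w;
          a = L (side f k); b = L (side f ((k + 1) mod 3)); c = L (side f ((k + 2) mod 3))
      in arcosh ((cosh a + cosh b * cosh c) / (sinh b * sinh c)))"

definition Bsum :: "'f set \<Rightarrow> ('e \<Rightarrow> 'v) \<Rightarrow> ('e \<Rightarrow> 'v) \<Rightarrow> ('e \<Rightarrow> real) \<Rightarrow> ('f \<Rightarrow> nat \<Rightarrow> 'e)
                      \<Rightarrow> ('f \<Rightarrow> nat \<Rightarrow> 'v) \<Rightarrow> 'v \<Rightarrow> real^'v::finite \<Rightarrow> real" where
  "Bsum F ea eb l0 side corner i w =
     (\<Sum>f\<in>F. \<Sum>k\<in>{k. k < 3 \<and> corner f k = i}. theta ea eb l0 side w f k)"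

(* Phi(w) = - int_{w0}^{w} sum_i B_i dw_i, computed along the straight segment
   from w0 to w (W is convex and the form is closed). *)
definition Phi :: "'f set \<Rightarrow> ('e \<Rightarrow> 'v) \<Rightarrow> ('e \<Rightarrow> 'v) \<Rightarrow> ('e \<Rightarrow> real) \<Rightarrow> ('f \<Rightarrow> nat \<Rightarrow> 'e)
                      \<Rightarrow> ('f \<Rightarrow> nat \<Rightarrow> 'v) \<Rightarrow> real^'v::finite \<Rightarrow> real^'v \<Rightarrow> real" where
  "Phi F ea eb l0 side corner w0 w =
     - integral {0..1} (\<lambda>t. \<Sum>i\<in>UNIV.
          Bsum F ea eb l0 side corner i (w0 + t *\<^sub>R (w - w0)) * (w $ i - w0 $ i))"

end

theory Submission
  imports Defs
begin

text \<open>
  On a segment of \<open>W\<close> with direction \<open>h\<close>, the function \<open>\<Phi>\<close> has derivative \<open>-\<Sum>\<^sub>i B\<^sub>i h\<^sub>i\<close>: the form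
  \<open>\<Sum>\<^sub>i B\<^sub>i dw\<^sub>i\<close> has a symmetric derivative \<open>H\<close>, so differentiating the radial integral that defines \<open>\<Phi>\<close>
  gives back the form. Hence the second derivative is \<open>-H(h, h)\<close>, and \<open>H\<close> is a sum over faces. By the
  cosine law for right-angled hexagons, a face whose sides have hyperbolic cosines \<open>a\<^sub>k > 1\<close> contributes
  \<open>2 / \<surd>\<Delta>\<close> times a quadratic form in the values \<open>h\<^sub>k\<close> of \<open>h\<close> at its three boundary components, and
  this form equals \<open>-(\<Sum>\<^sub>k q\<^sub>k (h\<^sub>k\<^sub>+\<^sub>1 + h\<^sub>k\<^sub>+\<^sub>2)\<^sup>2 + 2 \<Sum>\<^sub>k (a\<^sub>k - 1) h\<^sub>k\<^sup>2 + \<Sum>\<^sub>k (h\<^sub>k - h\<^sub>k\<^sub>+\<^sub>1)\<^sup>2)\<close> with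
  \<open>q\<^sub>k = (a\<^sub>k\<^sub>+\<^sub>1 + a\<^sub>k\<^sub>+\<^sub>2) / (a\<^sub>k - 1) > 0\<close>. It is negative unless \<open>h\<close> vanishes on the face, and every
  boundary component lies on some face, so \<open>\<Phi>\<close> has positive second derivative along every segment.
\<close>

section \<open>Strict convexity from the second derivative\<close>

lemma convex_combination_less_of_strict_mono_deriv:
  fixes g g' :: "real \<Rightarrow> real" and t :: real
  assumes deriv: "\<And>s. s \<in> {0..1} \<Longrightarrow> (g has_real_derivative g' s) (at s within {0..1})"
    and mono: "\<And>a b. 0 \<le> a \<Longrightarrow> a < b \<Longrightarrow> b \<le> 1 \<Longrightarrow> g' a < g' b"
    and t: "0 < t" "t < 1"
  shows "g t < (1 - t) * g 0 + t * g 1"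
proof -
  have deriv_at: "(g has_real_derivative g' s) (at s)" if "0 < s" "s < 1" for s
    using deriv[of s] that by (simp add: at_within_Icc_at)
  have cont: "continuous_on {0..1} g"
    using deriv by (rule DERIV_continuous_on)
  have diff: "g differentiable (at s)" if "0 < s" "s < 1" for s
    using deriv_at[OF that] real_differentiable_def by blast
  obtain l1 z1 where z1: "0 < z1" "z1 < t" "(g has_real_derivative l1) (at z1)" "g t - g 0 = (t - 0) * l1"
    using MVT[OF t(1) continuous_on_subset[OF cont] diff] t by auto
  obtain l2 z2 where z2: "t < z2" "z2 < 1" "(g has_real_derivative l2) (at z2)" "g 1 - g t = (1 - t) * l2"
    using MVT[OF t(2) continuous_on_subset[OF cont] diff] t by auto
  have "l1 = g' z1" "l2 = g' z2"
    using DERIV_unique[OF z1(3) deriv_at] DERIV_unique[OF z2(3) deriv_at] z1 z2 t by auto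
  then have "l1 < l2"
    using mono[of z1 z2] z1 z2 by auto
  then have "0 < t * (1 - t) * (l2 - l1)"
    using t by simp
  also have "t * (1 - t) * (l2 - l1) = (1 - t) * g 0 + t * g 1 - g t"
  proof -
    have "g 1 = g t + (1 - t) * l2" "g t = g 0 + t * l1"
      using z1(4) z2(4) by simp_all
    then show ?thesis by algebra
  qed
  finally show ?thesis by simp
qed

lemma strictly_convex_onI_second_derivative:
  fixes f :: "'a::real_vector \<Rightarrow> real"
  assumes f': "\<And>x y s. x \<in> U \<Longrightarrow> y \<in> U \<Longrightarrow> s \<in> {0..1} \<Longrightarrow>
      ((\<lambda>s. f (x + s *\<^sub>R (y - x))) has_real_derivative f' x y s) (at s within {0..1})"
    and f'': "\<And>x y s. x \<in> U \<Longrightarrow> y \<in> U \<Longrightarrow> x \<noteq> y \<Longrightarrow> s \<in> {0..1} \<Longrightarrow>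
      (f' x y has_real_derivative f'' x y s) (at s) \<and> f'' x y s > 0"
  shows "strictly_convex_on U f"
  unfolding strictly_convex_on_def
proof (intro ballI allI impI)
  fix x y and t :: real
  assume x: "x \<in> U" and y: "y \<in> U" and "x \<noteq> y" "0 < t" "t < 1"
  have "f (x + t *\<^sub>R (y - x)) < (1 - t) * f (x + 0 *\<^sub>R (y - x)) + t * f (x + 1 *\<^sub>R (y - x))"
  proof (rule convex_combination_less_of_strict_mono_deriv[OF f'[OF x y] _ \<open>0 < t\<close> \<open>t < 1\<close>])
    fix a b :: real
    assume "0 \<le> a" "a < b" "b \<le> 1"
    show "f' x y a < f' x y b"
    proof (rule DERIV_pos_imp_increasing[OF \<open>a < b\<close>])
      fix s assume "a \<le> s" "s \<le> b"
      then have "s \<in> {0..1}" using \<open>0 \<le> a\<close> \<open>b \<le> 1\<close> by simp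
      then show "\<exists>l. (f' x y has_real_derivative l) (at s) \<and> 0 < l"
        using f''[OF x y \<open>x \<noteq> y\<close>] by blast
    qed
  qed
  moreover have "x + t *\<^sub>R (y - x) = (1 - t) *\<^sub>R x + t *\<^sub>R y"
    by (simp add: algebra_simps)
  ultimately show "f ((1 - t) *\<^sub>R x + t *\<^sub>R y) < (1 - t) * f x + t * f y"
    by simp
qed

section \<open>Primitives of closed 1-forms\<close>

lemma continuous_on_compose_pair:
  assumes "continuous_on (U \<times> V) (\<lambda>(u, v). S u v)"
    and "continuous_on T f" "continuous_on T g" "f ` T \<subseteq> U" "g ` T \<subseteq> V"
  shows "continuous_on T (\<lambda>x. S (f x) (g x))"
  using continuous_on_compose2[OF assms(1) continuous_on_Pair[OF assms(2,3)]] assms(4,5)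
  by auto

lemma continuous_on_compose_triple:
  assumes "continuous_on (U \<times> V \<times> W) (\<lambda>(u, v, w). S u v w)"
    and "continuous_on T f" "continuous_on T g" "continuous_on T h"
    and "f ` T \<subseteq> U" "g ` T \<subseteq> V" "h ` T \<subseteq> W"
  shows "continuous_on T (\<lambda>x. S (f x) (g x) (h x))"
  using continuous_on_compose2[OF assms(1) continuous_on_Pair[OF assms(2) continuous_on_Pair[OF assms(3,4)]]]
    assms(5-7) by auto

lemma DERIV_linear_family_add_scale:
  fixes S :: "real \<Rightarrow> 'a::real_vector \<Rightarrow> real"
  assumes "\<And>r. linear (S r)" and "\<And>h. ((\<lambda>r. S r h) has_real_derivative D h) (at r0)"
  shows "D (h + c *\<^sub>R g) = D h + c * D g"
proof (rule DERIV_unique)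
  show "((\<lambda>r. S r (h + c *\<^sub>R g)) has_real_derivative D (h + c *\<^sub>R g)) (at r0)"
    by (rule assms(2))
  show "((\<lambda>r. S r (h + c *\<^sub>R g)) has_real_derivative D h + c * D g) (at r0)"
    using DERIV_add[OF assms(2)[of h] DERIV_cmult[OF assms(2)[of g]]]
    by (simp add: linear_add[OF assms(1)] linear_scale[OF assms(1)])
qed

lemma has_integral_add_mult_deriv:
  fixes \<phi> \<phi>' :: "real \<Rightarrow> real"
  assumes "\<And>t. t \<in> {0..1} \<Longrightarrow> (\<phi> has_real_derivative \<phi>' t) (at t)"
  shows "((\<lambda>t. \<phi> t + t * \<phi>' t) has_integral \<phi> 1) {0..1}"
proof -
  have "((\<lambda>t. t * \<phi> t) has_real_derivative \<phi> t + t * \<phi>' t) (at t)" if "t \<in> {0..1}" for t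
    using DERIV_mult[OF DERIV_ident assms[OF that]] by (simp add: algebra_simps)
  then have "((\<lambda>t. t * \<phi> t) has_vector_derivative \<phi> t + t * \<phi>' t) (at t within {0..1})" if "t \<in> {0..1}" for t
    using that by (simp add: has_real_derivative_iff_has_vector_derivative[symmetric] has_field_derivative_at_within)
  from fundamental_theorem_of_calculus[OF _ this] show ?thesis
    by simp
qed

lemma linear_family_pairing_has_derivative:
  fixes S :: "'a::real_normed_vector \<Rightarrow> 'a \<Rightarrow> real" and H :: "'a \<Rightarrow> 'a \<Rightarrow> 'a \<Rightarrow> real"
  assumes S_linear: "\<And>w. linear (S w)"
    and S_deriv: "\<And>a d h r. a + r *\<^sub>R d \<in> U \<Longrightarrow>
      ((\<lambda>r. S (a + r *\<^sub>R d) h) has_real_derivative H (a + r *\<^sub>R d) d h) (at r)"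
    and H_commute: "\<And>w d h. w \<in> U \<Longrightarrow> H w d h = H w h d"
    and z: "b + (t * s) *\<^sub>R v \<in> U"
  shows "((\<lambda>s. S (b + (t * s) *\<^sub>R v) (q + s *\<^sub>R v)) has_real_derivative
      S (b + (t * s) *\<^sub>R v) v + t * H (b + (t * s) *\<^sub>R v) (q + s *\<^sub>R v) v) (at s)"
proof -
  let ?z = "b + (t * s) *\<^sub>R v"
  have S_split: "(\<lambda>s. S (b + (t * s) *\<^sub>R v) (q + s *\<^sub>R v)) = (\<lambda>s. S (b + (t * s) *\<^sub>R v) q + s * S (b + (t * s) *\<^sub>R v) v)"
    by (simp add: linear_add[OF S_linear] linear_scale[OF S_linear])
  have deriv: "((\<lambda>s. S (b + (t * s) *\<^sub>R v) q + s * S (b + (t * s) *\<^sub>R v) v) has_real_derivative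
      H ?z v q * t + (1 * S ?z v + H ?z v v * t * s)) (at s)"
    using z by (auto intro!: derivative_eq_intros DERIV_chain2[OF S_deriv])
  have "S ?z v + t * H ?z (q + s *\<^sub>R v) v = H ?z v q * t + (1 * S ?z v + H ?z v v * t * s)"
    using DERIV_linear_family_add_scale[OF S_linear S_deriv, of ?z 0 v q s v] z H_commute[OF z]
    by (simp add: algebra_simps)
  with deriv show ?thesis
    unfolding S_split by (simp only:)
qed

text \<open>By the Leibniz rule and the symmetry of \<open>H\<close>, the \<open>s\<close>-derivative of the integrand is
  \<open>d/dt (t S(z t) v)\<close>, which integrates to \<open>S(p s) v\<close>.\<close>

lemma radial_integral_has_derivative_along_segment:
  fixes S :: "'a::real_normed_vector \<Rightarrow> 'a \<Rightarrow> real" and H :: "'a \<Rightarrow> 'a \<Rightarrow> 'a \<Rightarrow> real"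
  assumes U: "convex U" "w0 \<in> U" "x \<in> U" "y \<in> U" and s: "s \<in> {0..1}"
    and S_linear: "\<And>w. linear (S w)"
    and S_deriv: "\<And>a d h r. a + r *\<^sub>R d \<in> U \<Longrightarrow>
      ((\<lambda>r. S (a + r *\<^sub>R d) h) has_real_derivative H (a + r *\<^sub>R d) d h) (at r)"
    and H_commute: "\<And>w d h. w \<in> U \<Longrightarrow> H w d h = H w h d"
    and S_cont: "continuous_on (U \<times> UNIV) (\<lambda>(w, h). S w h)"
    and H_cont: "continuous_on (U \<times> UNIV \<times> UNIV) (\<lambda>(w, d, h). H w d h)"
  shows "((\<lambda>s. integral {0..1} (\<lambda>t. S (w0 + t *\<^sub>R (x + s *\<^sub>R (y - x) - w0)) (x + s *\<^sub>R (y - x) - w0)))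
      has_real_derivative S (x + s *\<^sub>R (y - x)) (y - x)) (at s within {0..1})"
proof -
  define v where "v = y - x"
  define p where "p s = x + s *\<^sub>R v" for s
  define z where "z s t = w0 + t *\<^sub>R (p s - w0)" for s t
  define G where "G s t = S (z s t) (p s - w0)" for s t
  define G' where "G' s t = S (z s t) v + t * H (z s t) (p s - w0) v" for s t
  have z_in: "z s t \<in> U" if "s \<in> {0..1}" "t \<in> {0..1}" for s t
  proof -
    have "p s \<in> U"
      using convexD_alt[OF U(1,3,4), of s] that(1) by (simp add: p_def v_def algebra_simps)
    from convexD_alt[OF U(1,2) this, of t] that(2) show ?thesis
      by (simp add: z_def algebra_simps)
  qed
  have G_deriv: "((\<lambda>s. G s t) has_real_derivative G' s t) (at s within {0..1})"
    if "s \<in> {0..1}" "t \<in> {0..1}" for s t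
  proof -
    define b where "b = w0 + t *\<^sub>R (x - w0)"
    have z_eq: "z s' t = b + (t * s') *\<^sub>R v" and p_eq: "p s' - w0 = (x - w0) + s' *\<^sub>R v" for s'
      by (simp_all add: z_def p_def b_def algebra_simps)
    have "((\<lambda>s. S (b + (t * s) *\<^sub>R v) ((x - w0) + s *\<^sub>R v)) has_real_derivative
        S (b + (t * s) *\<^sub>R v) v + t * H (b + (t * s) *\<^sub>R v) ((x - w0) + s *\<^sub>R v) v) (at s)"
      using linear_family_pairing_has_derivative[OF S_linear S_deriv H_commute] z_in[OF that]
      by (simp add: z_eq)
    then show ?thesis
      unfolding G_def G'_def z_eq p_eq by (rule has_field_derivative_at_within)
  qed
  have z_cont: "continuous_on ({0..1} \<times> {0..1}) (\<lambda>q. z (fst q) (snd q))"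
    unfolding z_def p_def by (intro continuous_intros)
  have G_integrable: "G s integrable_on cbox 0 1" if "s \<in> {0..1}" for s
    unfolding G_def box_real
    by (intro integrable_continuous_interval continuous_on_compose_pair[OF S_cont])
       (use z_in that in \<open>auto simp: z_def p_def intro!: continuous_intros\<close>)
  have G'_cont: "continuous_on ({0..1} \<times> cbox 0 1) (\<lambda>(s, t). G' s t)"
    unfolding G'_def split_beta box_real
    by (intro continuous_intros continuous_on_compose_pair[OF S_cont z_cont]
          continuous_on_compose_triple[OF H_cont z_cont])
       (use z_in in \<open>auto simp: p_def intro!: continuous_intros\<close>)
  have "(G' s has_integral S (z s 1) v) {0..1}"
    unfolding G'_def
    by (rule has_integral_add_mult_deriv) (use S_deriv[of w0 _ "p s - w0" v] z_in[OF s] in \<open>simp add: z_def\<close>)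
  then have G'_integral: "integral {0..1} (G' s) = S (p s) v"
    by (simp add: z_def integral_unique)
  have "((\<lambda>s. integral (cbox 0 1) (G s)) has_real_derivative integral (cbox 0 1) (G' s)) (at s within {0..1})"
    by (rule leibniz_rule_field_derivative[OF _ G_integrable G'_cont s])
       (use G_deriv in \<open>auto simp: box_real\<close>)
  then show ?thesis
    unfolding box_real G'_integral G_def[abs_def] z_def p_def v_def .
qed

section \<open>Right-angled hexagons\<close>

text \<open>If three pairwise non-adjacent sides of a right-angled hexagon have hyperbolic cosines \<open>a\<close>, \<open>b\<close>, \<open>c\<close>,
  then \<open>hex_side a b c\<close> is the length of the side opposite to the first one.\<close>

definition hex_side :: "real \<Rightarrow> real \<Rightarrow> real \<Rightarrow> real" where
  "hex_side a b c = arcosh ((a + b * c) / (sqrt (b\<^sup>2 - 1) * sqrt (c\<^sup>2 - 1)))"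

definition hex_discr :: "real \<Rightarrow> real \<Rightarrow> real \<Rightarrow> real" where
  "hex_discr a b c = a\<^sup>2 + b\<^sup>2 + c\<^sup>2 + 2 * a * b * c - 1"

lemma hex_discr_pos:
  assumes "a > 1" "b > 1" "c > 1"
  shows "hex_discr a b c > 0"
proof -
  have "a\<^sup>2 > 1" "a * b * c > 0" "b\<^sup>2 > 0" "c\<^sup>2 > 0"
    using assms by (auto simp: one_less_power)
  then show ?thesis
    unfolding hex_discr_def by linarith
qed

lemma hex_discr_rotate: "hex_discr b c a = hex_discr a b c"
  unfolding hex_discr_def by (simp add: algebra_simps)

lemma hex_side_arg_gt_1:
  assumes "a > 1" "b > 1" "c > 1"
  shows "(a + b * c) / (sqrt (b\<^sup>2 - 1) * sqrt (c\<^sup>2 - 1)) > 1"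
proof -
  have "sqrt (u\<^sup>2 - 1) < u" "sqrt (u\<^sup>2 - 1) > 0" if "u > 1" for u :: real
  proof -
    show "sqrt (u\<^sup>2 - 1) < u"
      using real_sqrt_less_mono[of "u\<^sup>2 - 1" "u\<^sup>2"] that by simp
    show "sqrt (u\<^sup>2 - 1) > 0"
      using that by (simp add: one_less_power)
  qed
  then have "0 < sqrt (b\<^sup>2 - 1) * sqrt (c\<^sup>2 - 1)" "sqrt (b\<^sup>2 - 1) * sqrt (c\<^sup>2 - 1) < b * c"
    using assms by (auto intro: mult_strict_mono)
  then show ?thesis
    using assms by (simp add: field_simps)
qed

lemma hex_side_arg_sq_minus_1:
  assumes "b > 1" "c > 1"
  shows "((a + b * c) / (sqrt (b\<^sup>2 - 1) * sqrt (c\<^sup>2 - 1)))\<^sup>2 - 1 = hex_discr a b c / ((b\<^sup>2 - 1) * (c\<^sup>2 - 1))"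
proof -
  have "b\<^sup>2 - 1 > 0" "c\<^sup>2 - 1 > 0"
    using assms by (simp_all add: one_less_power)
  then have "((a + b * c) / (sqrt (b\<^sup>2 - 1) * sqrt (c\<^sup>2 - 1)))\<^sup>2 - 1
      = ((a + b * c)\<^sup>2 - (b\<^sup>2 - 1) * (c\<^sup>2 - 1)) / ((b\<^sup>2 - 1) * (c\<^sup>2 - 1))"
    by (simp add: power_divide power_mult_distrib diff_divide_distrib)
  also have "(a + b * c)\<^sup>2 - (b\<^sup>2 - 1) * (c\<^sup>2 - 1) = hex_discr a b c"
    by (simp add: hex_discr_def power2_eq_square algebra_simps)
  finally show ?thesis .
qed

lemma hex_side_has_derivative:
  fixes a b c :: "real \<Rightarrow> real"
  assumes "(a has_real_derivative A) (at r)" "(b has_real_derivative B) (at r)"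
    "(c has_real_derivative C) (at r)"
    and gt_1: "a r > 1" "b r > 1" "c r > 1"
  shows "((\<lambda>r. hex_side (a r) (b r) (c r)) has_real_derivative
      (A - (c r + a r * b r) / ((b r)\<^sup>2 - 1) * B - (b r + a r * c r) / ((c r)\<^sup>2 - 1) * C)
        / sqrt (hex_discr (a r) (b r) (c r))) (at r)"
proof -
  define \<beta> where "\<beta> = sqrt ((b r)\<^sup>2 - 1)"
  define \<gamma> where "\<gamma> = sqrt ((c r)\<^sup>2 - 1)"
  define N where "N = a r + b r * c r"
  have sq_pos: "(b r)\<^sup>2 - 1 > 0" "(c r)\<^sup>2 - 1 > 0"
    using gt_1 by (auto simp: one_less_power)
  then have pos: "\<beta> > 0" "\<gamma> > 0" and sq: "\<beta>\<^sup>2 = (b r)\<^sup>2 - 1" "\<gamma>\<^sup>2 = (c r)\<^sup>2 - 1"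
    by (auto simp: \<beta>_def \<gamma>_def)
  have d\<beta>: "((\<lambda>r. sqrt ((b r)\<^sup>2 - 1)) has_real_derivative b r * B / \<beta>) (at r)"
    using sq_pos pos unfolding \<beta>_def by (auto intro!: derivative_eq_intros assms(2) simp: field_simps)
  have d\<gamma>: "((\<lambda>r. sqrt ((c r)\<^sup>2 - 1)) has_real_derivative c r * C / \<gamma>) (at r)"
    using sq_pos pos unfolding \<gamma>_def by (auto intro!: derivative_eq_intros assms(3) simp: field_simps)
  define Q where "Q = ((A + (B * c r + b r * C)) * (\<beta> * \<gamma>) - N * (b r * B / \<beta> * \<gamma> + \<beta> * (c r * C / \<gamma>)))
      / ((\<beta> * \<gamma>) * (\<beta> * \<gamma>))"
  have "((\<lambda>r. (a r + b r * c r) / (sqrt ((b r)\<^sup>2 - 1) * sqrt ((c r)\<^sup>2 - 1))) has_real_derivative Q) (at r)"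
    using DERIV_divide[OF DERIV_add[OF assms(1) DERIV_mult[OF assms(2,3)]] DERIV_mult[OF d\<beta> d\<gamma>]] pos
    unfolding Q_def N_def by (simp add: \<beta>_def \<gamma>_def ac_simps)
  from DERIV_chain2[OF arcosh_real_has_field_derivative[OF hex_side_arg_gt_1[OF gt_1]] this]
  have "((\<lambda>r. hex_side (a r) (b r) (c r)) has_real_derivative
      Q / sqrt ((N / (\<beta> * \<gamma>))\<^sup>2 - 1)) (at r)"
    by (simp add: hex_side_def N_def \<beta>_def \<gamma>_def)
  moreover have sqrt_eq: "sqrt ((N / (\<beta> * \<gamma>))\<^sup>2 - 1) = sqrt (hex_discr (a r) (b r) (c r)) / (\<beta> * \<gamma>)"
    unfolding N_def \<beta>_def \<gamma>_def hex_side_arg_sq_minus_1[OF gt_1(2,3)]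
    by (simp add: real_sqrt_divide real_sqrt_mult)
  moreover have numerator_eq: "\<beta> * \<gamma> * Q = A - (c r + a r * b r) / ((b r)\<^sup>2 - 1) * B - (b r + a r * c r) / ((c r)\<^sup>2 - 1) * C"
  proof -
    have "\<beta> * \<gamma> * Q = A + B * c r + b r * C - N * b r * B / \<beta>\<^sup>2 - N * c r * C / \<gamma>\<^sup>2"
      using pos unfolding Q_def by (simp add: field_simps power2_eq_square)
    also have "\<dots> = A - (c r + a r * b r) / ((b r)\<^sup>2 - 1) * B - (b r + a r * c r) / ((c r)\<^sup>2 - 1) * C"
      using sq_pos unfolding sq N_def by (simp add: field_simps power2_eq_square)
    finally show ?thesis .
  qed
  ultimately show ?thesis
    unfolding sqrt_eq numerator_eq[symmetric]
    using pos hex_discr_pos[OF gt_1] by (simp add: field_simps)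
qed

text \<open>The derivative of \<open>hex_side\<close> when each argument \<open>cosh l\<close> moves at rate
  \<open>2 (cosh l + 1) x = 4 cosh\<^sup>2 (l/2) x\<close>, i.e. when \<open>x\<close> is the rate of \<open>ln cosh (l/2)\<close>.\<close>

definition hex_side_deriv :: "real \<Rightarrow> real \<Rightarrow> real \<Rightarrow> real \<Rightarrow> real \<Rightarrow> real \<Rightarrow> real" where
  "hex_side_deriv a b c x y z =
     2 * ((a + 1) * x - (c + a * b) / (b - 1) * y - (b + a * c) / (c - 1) * z) / sqrt (hex_discr a b c)"

lemma hex_side_has_derivative_cosh_double:
  fixes a b c :: "real \<Rightarrow> real"
  assumes "(a has_real_derivative 2 * (a r + 1) * x) (at r)" "(b has_real_derivative 2 * (b r + 1) * y) (at r)"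
    "(c has_real_derivative 2 * (c r + 1) * z) (at r)"
    and gt_1: "a r > 1" "b r > 1" "c r > 1"
  shows "((\<lambda>r. hex_side (a r) (b r) (c r)) has_real_derivative hex_side_deriv (a r) (b r) (c r) x y z) (at r)"
proof -
  have cancel: "K / (w\<^sup>2 - 1) * (2 * (w + 1) * t) = 2 * (K / (w - 1) * t)" if "w > 1" for K w t :: real
  proof -
    have "1 < w\<^sup>2"
      using that by (simp add: one_less_power)
    then have "w\<^sup>2 - 1 \<noteq> 0" "w - 1 \<noteq> 0"
      using that by linarith+
    then show ?thesis
      by (simp add: field_simps power2_eq_square)
  qed
  have "(2 * (a r + 1) * x - (c r + a r * b r) / ((b r)\<^sup>2 - 1) * (2 * (b r + 1) * y)
      - (b r + a r * c r) / ((c r)\<^sup>2 - 1) * (2 * (c r + 1) * z)) / sqrt (hex_discr (a r) (b r) (c r))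
      = hex_side_deriv (a r) (b r) (c r) x y z"
    unfolding hex_side_deriv_def cancel[OF gt_1(2)] cancel[OF gt_1(3)] by (simp add: algebra_simps)
  then show ?thesis
    using hex_side_has_derivative[OF assms] by simp
qed

lemma continuous_on_hex_side:
  fixes a b c :: "'a::topological_space \<Rightarrow> real"
  assumes "continuous_on S a" "continuous_on S b" "continuous_on S c"
    and "\<And>x. x \<in> S \<Longrightarrow> a x > 1 \<and> b x > 1 \<and> c x > 1"
  shows "continuous_on S (\<lambda>x. hex_side (a x) (b x) (c x))"
  unfolding hex_side_def
proof (rule continuous_on_compose2[OF continuous_on_arcosh[OF order.refl]])
  have "1 < (b x)\<^sup>2" "1 < (c x)\<^sup>2" if "x \<in> S" for x
    using assms(4)[OF that] by (simp_all add: one_less_power)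
  then have "(b x)\<^sup>2 \<noteq> 1" "(c x)\<^sup>2 \<noteq> 1" if "x \<in> S" for x
    using that by fastforce+
  then show "continuous_on S (\<lambda>x. (a x + b x * c x) / (sqrt ((b x)\<^sup>2 - 1) * sqrt ((c x)\<^sup>2 - 1)))"
    using assms(1-3) by (intro continuous_intros) auto
  show "(\<lambda>x. (a x + b x * c x) / (sqrt ((b x)\<^sup>2 - 1) * sqrt ((c x)\<^sup>2 - 1))) ` S \<subseteq> {1..}"
    using hex_side_arg_gt_1 assms(4) by (fastforce simp: less_imp_le)
qed

text \<open>In the variables \<open>q\<^sub>k\<close> the form is visibly symmetric, and its diagonal is minus a positive
  combination of squares.\<close>

definition hexagon_form ::
  "real \<Rightarrow> real \<Rightarrow> real \<Rightarrow> real \<Rightarrow> real \<Rightarrow> real \<Rightarrow> real \<Rightarrow> real \<Rightarrow> real \<Rightarrow> real" where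
  "hexagon_form a0 a1 a2 d0 d1 d2 h0 h1 h2 =
    (let q0 = (a1 + a2) / (a0 - 1); q1 = (a2 + a0) / (a1 - 1); q2 = (a0 + a1) / (a2 - 1) in
     - (2 * a0 + q1 + q2) * d0 * h0 - (2 * a1 + q2 + q0) * d1 * h1 - (2 * a2 + q0 + q1) * d2 * h2
     + (1 - q2) * (d0 * h1 + d1 * h0) + (1 - q0) * (d1 * h2 + d2 * h1) + (1 - q1) * (d2 * h0 + d0 * h2))"

lemma continuous_on_hexagon_form [continuous_intros]:
  fixes a0 a1 a2 d0 d1 d2 h0 h1 h2 :: "'a::topological_space \<Rightarrow> real"
  assumes "continuous_on S a0" "continuous_on S a1" "continuous_on S a2"
    "continuous_on S d0" "continuous_on S d1" "continuous_on S d2"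
    "continuous_on S h0" "continuous_on S h1" "continuous_on S h2"
    and "\<And>x. x \<in> S \<Longrightarrow> a0 x \<noteq> 1 \<and> a1 x \<noteq> 1 \<and> a2 x \<noteq> 1"
  shows "continuous_on S (\<lambda>x. hexagon_form (a0 x) (a1 x) (a2 x) (d0 x) (d1 x) (d2 x) (h0 x) (h1 x) (h2 x))"
  unfolding hexagon_form_def Let_def using assms by (intro continuous_intros) auto

lemma hexagon_form_commute:
  "hexagon_form a0 a1 a2 d0 d1 d2 h0 h1 h2 = hexagon_form a0 a1 a2 h0 h1 h2 d0 d1 d2"
  unfolding hexagon_form_def Let_def by (simp add: algebra_simps)

lemma hex_side_deriv_cyclic_sum:
  assumes "a0 \<noteq> 1" "a1 \<noteq> 1" "a2 \<noteq> 1"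
  shows "hex_side_deriv a0 a1 a2 (d1 + d2) (d2 + d0) (d0 + d1) * h0
   + hex_side_deriv a1 a2 a0 (d2 + d0) (d0 + d1) (d1 + d2) * h1
   + hex_side_deriv a2 a0 a1 (d0 + d1) (d1 + d2) (d2 + d0) * h2
   = 2 * hexagon_form a0 a1 a2 d0 d1 d2 h0 h1 h2 / sqrt (hex_discr a0 a1 a2)"
proof -
  define q0 where "q0 = (a1 + a2) / (a0 - 1)"
  define q1 where "q1 = (a2 + a0) / (a1 - 1)"
  define q2 where "q2 = (a0 + a1) / (a2 - 1)"
  have "(a2 + a1 * a0) / (a0 - 1) = a1 + q0" "(a1 + a2 * a0) / (a0 - 1) = a2 + q0"
    "(a0 + a2 * a1) / (a1 - 1) = a2 + q1" "(a2 + a0 * a1) / (a1 - 1) = a0 + q1"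
    "(a1 + a0 * a2) / (a2 - 1) = a0 + q2" "(a0 + a1 * a2) / (a2 - 1) = a1 + q2"
    using assms by (simp_all add: q0_def q1_def q2_def field_simps)
  then have numerator: "((a0 + 1) * (d1 + d2) - (a2 + a0 * a1) / (a1 - 1) * (d2 + d0) - (a1 + a0 * a2) / (a2 - 1) * (d0 + d1)) * h0
      + ((a1 + 1) * (d2 + d0) - (a0 + a1 * a2) / (a2 - 1) * (d0 + d1) - (a2 + a1 * a0) / (a0 - 1) * (d1 + d2)) * h1
      + ((a2 + 1) * (d0 + d1) - (a1 + a2 * a0) / (a0 - 1) * (d1 + d2) - (a0 + a2 * a1) / (a1 - 1) * (d2 + d0)) * h2
      = hexagon_form a0 a1 a2 d0 d1 d2 h0 h1 h2"
    unfolding hexagon_form_def Let_def q0_def[symmetric] q1_def[symmetric] q2_def[symmetric]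
    by (simp add: algebra_simps)
  have common_denominator:
    "2 * N0 / s * h0 + 2 * N1 / s * h1 + 2 * N2 / s * h2 = 2 * (N0 * h0 + N1 * h1 + N2 * h2) / s"
    for N0 N1 N2 s :: real
    by (simp only: times_divide_eq_left add_divide_distrib mult.assoc distrib_left)
  have rotate: "hex_discr a1 a2 a0 = hex_discr a0 a1 a2" "hex_discr a2 a0 a1 = hex_discr a0 a1 a2"
    by (simp_all only: hex_discr_rotate)
  show ?thesis
    unfolding hex_side_deriv_def rotate common_denominator numerator ..
qed

lemma hexagon_form_neg:
  assumes "a0 > 1" "a1 > 1" "a2 > 1" and "d0 \<noteq> 0 \<or> d1 \<noteq> 0 \<or> d2 \<noteq> 0"
  shows "hexagon_form a0 a1 a2 d0 d1 d2 d0 d1 d2 < 0"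
proof -
  define q0 where "q0 = (a1 + a2) / (a0 - 1)"
  define q1 where "q1 = (a2 + a0) / (a1 - 1)"
  define q2 where "q2 = (a0 + a1) / (a2 - 1)"
  define P where "P = q0 * (d1 + d2)\<^sup>2 + q1 * (d2 + d0)\<^sup>2 + q2 * (d0 + d1)\<^sup>2"
  define Q where "Q = (a0 - 1) * d0\<^sup>2 + (a1 - 1) * d1\<^sup>2 + (a2 - 1) * d2\<^sup>2"
  define R where "R = (d0 - d1)\<^sup>2 + (d1 - d2)\<^sup>2 + (d2 - d0)\<^sup>2"
  have "hexagon_form a0 a1 a2 d0 d1 d2 d0 d1 d2 = - (P + 2 * Q + R)"
    unfolding hexagon_form_def Let_def q0_def[symmetric] q1_def[symmetric] q2_def[symmetric] P_def Q_def R_def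
    by (simp add: power2_eq_square algebra_simps)
  moreover have "P \<ge> 0"
    using assms(1-3) by (simp add: P_def q0_def q1_def q2_def)
  moreover have "Q > 0"
  proof -
    have "(a0 - 1) * d0\<^sup>2 \<ge> 0" "(a1 - 1) * d1\<^sup>2 \<ge> 0" "(a2 - 1) * d2\<^sup>2 \<ge> 0"
      and "(a0 - 1) * d0\<^sup>2 > 0 \<or> (a1 - 1) * d1\<^sup>2 > 0 \<or> (a2 - 1) * d2\<^sup>2 > 0"
      using assms by auto
    then show ?thesis
      unfolding Q_def by linarith
  qed
  moreover have "R \<ge> 0"
    by (simp add: R_def)
  ultimately show ?thesis
    by linarith
qed

section \<open>Ideal triangulations\<close>

locale ideal_triangulated_surface =
  fixes E :: "'e set" and F :: "'f set" and ea eb :: "'e \<Rightarrow> 'v::finite"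
    and side :: "'f \<Rightarrow> nat \<Rightarrow> 'e" and corner :: "'f \<Rightarrow> nat \<Rightarrow> 'v" and l0 :: "'e \<Rightarrow> real"
  assumes ideal_triangulation: "ideal_triangulation E F ea eb side corner"
begin

abbreviation W :: "(real^'v) set" where
  "W \<equiv> Wdom E ea eb l0"

lemma finite_faces: "finite F"
  using ideal_triangulation unfolding ideal_triangulation_def by auto

lemma side_in_edges: "f \<in> F \<Longrightarrow> k < 3 \<Longrightarrow> side f k \<in> E"
  using ideal_triangulation unfolding ideal_triangulation_def by auto

lemma side_endpoints_sum:
  fixes d :: "real^'v"
  assumes "f \<in> F" "k < 3"
  shows "d $ ea (side f k) + d $ eb (side f k) = d $ corner f ((k + 1) mod 3) + d $ corner f ((k + 2) mod 3)"
proof -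
  have "{ea (side f k), eb (side f k)} = {corner f ((k + 1) mod 3), corner f ((k + 2) mod 3)}"
    using ideal_triangulation assms unfolding ideal_triangulation_def by auto
  then show ?thesis
    by (auto simp: doubleton_eq_iff)
qed

lemma ex_corner: "\<exists>f\<in>F. \<exists>k<3. corner f k = i"
  using ideal_triangulation unfolding ideal_triangulation_def by auto

lemma convex_Wdom: "convex W"
  unfolding convex_def
proof (intro ballI allI impI)
  fix x y :: "real^'v" and u v :: real
  assume x: "x \<in> W" and y: "y \<in> W" and uv: "0 \<le> u" "0 \<le> v" "u + v = 1"
  show "u *\<^sub>R x + v *\<^sub>R y \<in> W"
    unfolding Wdom_def
  proof (intro CollectI ballI)
    fix e assume "e \<in> E"
    then have "- (x $ ea e + x $ eb e) < ln (cosh (l0 e / 2))" "- (y $ ea e + y $ eb e) < ln (cosh (l0 e / 2))"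
      using x y unfolding Wdom_def by auto
    from convex_bound_lt[OF this uv]
    show "- ln (cosh (l0 e / 2)) < (u *\<^sub>R x + v *\<^sub>R y) $ ea e + (u *\<^sub>R x + v *\<^sub>R y) $ eb e"
      by (simp add: algebra_simps)
  qed
qed

lemma segment_in_Wdom: "x \<in> W \<Longrightarrow> y \<in> W \<Longrightarrow> s \<in> {0..1} \<Longrightarrow> x + s *\<^sub>R (y - x) \<in> W"
  using convexD_alt[OF convex_Wdom, of x y s] by (simp add: algebra_simps)

lemma open_Wdom: "open W"
proof -
  have "W = (\<Inter>e\<in>E. {w. - ln (cosh (l0 e / 2)) < w $ ea e + w $ eb e})"
    unfolding Wdom_def by auto
  also have "open \<dots>"
    using ideal_triangulation unfolding ideal_triangulation_def
    by (intro open_INT ballI open_Collect_less continuous_intros) auto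
  finally show ?thesis .
qed

text \<open>The hyperbolic cosine of the edge length, by \<open>cosh l = 2 cosh\<^sup>2 (l/2) - 1\<close>.\<close>

definition cosh_length :: "real^'v \<Rightarrow> 'e \<Rightarrow> real" where
  "cosh_length w e = 2 * (exp (w $ ea e + w $ eb e) * cosh (l0 e / 2))\<^sup>2 - 1"

lemma cosh_half_length_gt_1:
  assumes "w \<in> W" "e \<in> E"
  shows "exp (w $ ea e + w $ eb e) * cosh (l0 e / 2) > 1"
proof -
  have "exp (- ln (cosh (l0 e / 2))) < exp (w $ ea e + w $ eb e)"
    using assms unfolding Wdom_def by auto
  then show ?thesis
    by (simp add: exp_minus field_simps)
qed

lemma cosh_length_gt_1: "w \<in> W \<Longrightarrow> e \<in> E \<Longrightarrow> cosh_length w e > 1"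
  using cosh_half_length_gt_1 by (simp add: cosh_length_def one_less_power)

lemma cosh_edge_len:
  assumes "w \<in> W" "e \<in> E"
  shows "cosh (edge_len ea eb l0 w e) = cosh_length w e"
  using cosh_half_length_gt_1[OF assms]
  by (simp add: edge_len_def cosh_length_def cosh_double_cosh)

lemma sinh_edge_len:
  assumes "w \<in> W" "e \<in> E"
  shows "sinh (edge_len ea eb l0 w e) = sqrt ((cosh_length w e)\<^sup>2 - 1)"
proof -
  define X where "X = exp (w $ ea e + w $ eb e) * cosh (l0 e / 2)"
  have "X > 1"
    using cosh_half_length_gt_1[OF assms] by (simp add: X_def)
  then have "sinh (edge_len ea eb l0 w e) = sqrt ((2 * X)\<^sup>2 * (X\<^sup>2 - 1))"
    by (simp add: edge_len_def X_def[symmetric] sinh_double sinh_arcosh_real real_sqrt_mult)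
  also have "(2 * X)\<^sup>2 * (X\<^sup>2 - 1) = (cosh_length w e)\<^sup>2 - 1"
    unfolding cosh_length_def X_def[symmetric] by (simp add: power2_eq_square algebra_simps)
  finally show ?thesis .
qed

lemma theta_eq_hex_side:
  assumes "w \<in> W" "f \<in> F" "k < 3"
  shows "theta ea eb l0 side w f k = hex_side (cosh_length w (side f k))
      (cosh_length w (side f ((k + 1) mod 3))) (cosh_length w (side f ((k + 2) mod 3)))"
  using side_in_edges[OF assms(2)] assms(1,3)
  by (simp add: theta_def hex_side_def cosh_edge_len sinh_edge_len)

lemma cosh_length_has_derivative:
  "((\<lambda>r. cosh_length (a + r *\<^sub>R d) e) has_real_derivative
      2 * (cosh_length (a + r *\<^sub>R d) e + 1) * (d $ ea e + d $ eb e)) (at r)"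
proof -
  have "(\<lambda>r. cosh_length (a + r *\<^sub>R d) e) =
      (\<lambda>r. 2 * (exp ((a $ ea e + a $ eb e) + r * (d $ ea e + d $ eb e)) * cosh (l0 e / 2))\<^sup>2 - 1)"
    by (simp add: cosh_length_def algebra_simps)
  then show ?thesis
    by (auto intro!: derivative_eq_intros simp: cosh_length_def power2_eq_square algebra_simps)
qed

lemma theta_has_derivative:
  assumes "f \<in> F" "k < 3" "a + r *\<^sub>R d \<in> W"
  defines "C \<equiv> \<lambda>j. cosh_length (a + r *\<^sub>R d) (side f ((k + j) mod 3))"
    and "\<delta> \<equiv> \<lambda>j. d $ ea (side f ((k + j) mod 3)) + d $ eb (side f ((k + j) mod 3))"
  shows "((\<lambda>r. theta ea eb l0 side (a + r *\<^sub>R d) f k) has_real_derivative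
      hex_side_deriv (C 0) (C 1) (C 2) (\<delta> 0) (\<delta> 1) (\<delta> 2)) (at r)"
proof (rule has_field_derivative_transform_within_open)
  show "((\<lambda>r. hex_side (cosh_length (a + r *\<^sub>R d) (side f ((k + 0) mod 3)))
      (cosh_length (a + r *\<^sub>R d) (side f ((k + 1) mod 3))) (cosh_length (a + r *\<^sub>R d) (side f ((k + 2) mod 3))))
      has_real_derivative hex_side_deriv (C 0) (C 1) (C 2) (\<delta> 0) (\<delta> 1) (\<delta> 2)) (at r)"
    unfolding C_def \<delta>_def
    by (intro hex_side_has_derivative_cosh_double cosh_length_has_derivative cosh_length_gt_1 assms(3)
        side_in_edges[OF assms(1)]) simp_all
  show "open ((\<lambda>r. a + r *\<^sub>R d) -` W)"
    by (intro open_vimage open_Wdom continuous_intros)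
  show "r \<in> (\<lambda>r. a + r *\<^sub>R d) -` W"
    using assms(3) by simp
  show "hex_side (cosh_length (a + s *\<^sub>R d) (side f ((k + 0) mod 3)))
      (cosh_length (a + s *\<^sub>R d) (side f ((k + 1) mod 3))) (cosh_length (a + s *\<^sub>R d) (side f ((k + 2) mod 3)))
      = theta ea eb l0 side (a + s *\<^sub>R d) f k" if "s \<in> (\<lambda>r. a + r *\<^sub>R d) -` W" for s
    using that assms(2) theta_eq_hex_side[OF _ assms(1,2)] by simp
qed

definition face_hessian :: "real^'v \<Rightarrow> real^'v \<Rightarrow> real^'v \<Rightarrow> 'f \<Rightarrow> real" where
  "face_hessian w d h f =
     (let C = \<lambda>j. cosh_length w (side f j) in
      2 * hexagon_form (C 0) (C 1) (C 2) (d $ corner f 0) (d $ corner f 1) (d $ corner f 2)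
            (h $ corner f 0) (h $ corner f 1) (h $ corner f 2)
        / sqrt (hex_discr (C 0) (C 1) (C 2)))"

definition angle_form :: "real^'v \<Rightarrow> real^'v \<Rightarrow> real" where
  "angle_form w h = (\<Sum>f\<in>F. \<Sum>k<3. theta ea eb l0 side w f k * h $ corner f k)"

definition angle_hessian :: "real^'v \<Rightarrow> real^'v \<Rightarrow> real^'v \<Rightarrow> real" where
  "angle_hessian w d h = (\<Sum>f\<in>F. face_hessian w d h f)"

lemma Bsum_eq_angle_form: "(\<Sum>i\<in>UNIV. Bsum F ea eb l0 side corner i w * h $ i) = angle_form w h"
proof -
  have "(\<Sum>i\<in>UNIV. Bsum F ea eb l0 side corner i w * h $ i)
      = (\<Sum>f\<in>F. \<Sum>i\<in>UNIV. \<Sum>k\<in>{k. k < 3 \<and> corner f k = i}. theta ea eb l0 side w f k * h $ corner f k)"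
    unfolding Bsum_def sum_distrib_right by (subst sum.swap) (intro sum.cong refl, auto)
  also have "\<dots> = angle_form w h"
    unfolding angle_form_def
    using sum.group[of "{..<3::nat}" UNIV "corner f" "\<lambda>k. theta ea eb l0 side w f k * h $ corner f k" for f]
    by simp
  finally show ?thesis .
qed

lemma face_angle_sum_has_derivative:
  assumes "f \<in> F" "a + r *\<^sub>R d \<in> W"
  shows "((\<lambda>r. \<Sum>k<3. theta ea eb l0 side (a + r *\<^sub>R d) f k * h $ corner f k) has_real_derivative
      face_hessian (a + r *\<^sub>R d) d h f) (at r)"
proof -
  let ?\<theta> = "\<lambda>k r. theta ea eb l0 side (a + r *\<^sub>R d) f k"
  let ?C = "\<lambda>j. cosh_length (a + r *\<^sub>R d) (side f j)"
  let ?\<delta> = "\<lambda>j. d $ corner f j"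
  have \<delta>: "d $ ea (side f 0) + d $ eb (side f 0) = ?\<delta> 1 + ?\<delta> 2"
    "d $ ea (side f 1) + d $ eb (side f 1) = ?\<delta> 2 + ?\<delta> 0"
    "d $ ea (side f 2) + d $ eb (side f 2) = ?\<delta> 0 + ?\<delta> 1"
    using side_endpoints_sum[OF assms(1), of 0 d] side_endpoints_sum[OF assms(1), of 1 d]
      side_endpoints_sum[OF assms(1), of 2 d]
    by (simp_all add: numeral_2_eq_2)
  have mod_3: "(0 + 0) mod 3 = (0::nat)" "(0 + 1) mod 3 = (1::nat)" "(0 + 2) mod 3 = (2::nat)"
    "(1 + 0) mod 3 = (1::nat)" "(1 + 1) mod 3 = (2::nat)" "(1 + 2) mod 3 = (0::nat)"
    "(2 + 0) mod 3 = (2::nat)" "(2 + 1) mod 3 = (0::nat)" "(2 + 2) mod 3 = (1::nat)"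
    by simp_all
  have D: "(?\<theta> 0 has_real_derivative
      hex_side_deriv (?C 0) (?C 1) (?C 2) (?\<delta> 1 + ?\<delta> 2) (?\<delta> 2 + ?\<delta> 0) (?\<delta> 0 + ?\<delta> 1)) (at r)"
    "(?\<theta> 1 has_real_derivative
      hex_side_deriv (?C 1) (?C 2) (?C 0) (?\<delta> 2 + ?\<delta> 0) (?\<delta> 0 + ?\<delta> 1) (?\<delta> 1 + ?\<delta> 2)) (at r)"
    "(?\<theta> 2 has_real_derivative
      hex_side_deriv (?C 2) (?C 0) (?C 1) (?\<delta> 0 + ?\<delta> 1) (?\<delta> 1 + ?\<delta> 2) (?\<delta> 2 + ?\<delta> 0)) (at r)"
    using theta_has_derivative[OF assms(1) _ assms(2), of 0] theta_has_derivative[OF assms(1) _ assms(2), of 1]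
      theta_has_derivative[OF assms(1) _ assms(2), of 2]
    unfolding mod_3 \<delta> by simp_all
  have C_gt_1: "?C j > 1" if "j < 3" for j
    using cosh_length_gt_1[OF assms(2) side_in_edges[OF assms(1) that]] .
  have C: "?C 0 \<noteq> 1" "?C 1 \<noteq> 1" "?C 2 \<noteq> 1"
    using C_gt_1[of 0] C_gt_1[of 1] C_gt_1[of 2] by simp_all
  have sum_3: "(\<Sum>k<3. g k) = g 0 + g 1 + g (2::nat)" for g :: "nat \<Rightarrow> real"
    by (simp add: eval_nat_numeral)
  show ?thesis
    unfolding sum_3 face_hessian_def Let_def hex_side_deriv_cyclic_sum[OF C, symmetric]
    by (intro DERIV_add DERIV_cmult_right D)
qed

lemma angle_form_has_derivative:
  "a + r *\<^sub>R d \<in> W \<Longrightarrow>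
    ((\<lambda>r. angle_form (a + r *\<^sub>R d) h) has_real_derivative angle_hessian (a + r *\<^sub>R d) d h) (at r)"
  unfolding angle_form_def angle_hessian_def by (intro DERIV_sum face_angle_sum_has_derivative)

lemma angle_hessian_commute: "angle_hessian w d h = angle_hessian w h d"
  unfolding angle_hessian_def face_hessian_def by (simp add: hexagon_form_commute)

lemma face_hessian_nonpos:
  assumes "w \<in> W" "f \<in> F"
  shows "face_hessian w d d f \<le> 0"
    and "\<exists>k<3. d $ corner f k \<noteq> 0 \<Longrightarrow> face_hessian w d d f < 0"
proof -
  let ?C = "\<lambda>j. cosh_length w (side f j)"
  have C: "?C 0 > 1" "?C 1 > 1" "?C 2 > 1"
    using cosh_length_gt_1[OF assms(1) side_in_edges[OF assms(2)]] by simp_all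
  then have "sqrt (hex_discr (?C 0) (?C 1) (?C 2)) > 0"
    by (simp add: hex_discr_pos)
  moreover have form_neg: "hexagon_form (?C 0) (?C 1) (?C 2) (d $ corner f 0) (d $ corner f 1) (d $ corner f 2)
      (d $ corner f 0) (d $ corner f 1) (d $ corner f 2) < 0" if "\<exists>k<3. d $ corner f k \<noteq> 0"
  proof (rule hexagon_form_neg[OF C])
    from that obtain k where "k < 3" "d $ corner f k \<noteq> 0" by blast
    moreover have "k = 0 \<or> k = 1 \<or> k = 2"
      using \<open>k < 3\<close> by auto
    ultimately show "d $ corner f 0 \<noteq> 0 \<or> d $ corner f 1 \<noteq> 0 \<or> d $ corner f 2 \<noteq> 0"
      by auto
  qed
  ultimately show "face_hessian w d d f < 0" if "\<exists>k<3. d $ corner f k \<noteq> 0"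
    unfolding face_hessian_def Let_def using that by (simp add: divide_neg_pos)
  show "face_hessian w d d f \<le> 0"
  proof (cases "\<exists>k<3. d $ corner f k \<noteq> 0")
    case True
    then show ?thesis
      using \<open>\<exists>k<3. d $ corner f k \<noteq> 0 \<Longrightarrow> face_hessian w d d f < 0\<close> by simp
  next
    case False
    then show ?thesis
      by (simp add: face_hessian_def hexagon_form_def)
  qed
qed

lemma angle_hessian_neg:
  assumes "w \<in> W" "d \<noteq> 0"
  shows "angle_hessian w d d < 0"
proof -
  obtain i where "d $ i \<noteq> 0"
    using assms(2) by (metis vec_eq_iff zero_index)
  moreover obtain f0 k where f0: "f0 \<in> F" "k < 3" "corner f0 k = i"
    using ex_corner by blast
  ultimately have "face_hessian w d d f0 < 0"
    using face_hessian_nonpos(2)[OF assms(1) f0(1)] by blast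
  moreover have "(\<Sum>f\<in>F - {f0}. face_hessian w d d f) \<le> 0"
    using face_hessian_nonpos(1)[OF assms(1)] by (intro sum_nonpos) simp
  moreover have "angle_hessian w d d = face_hessian w d d f0 + (\<Sum>f\<in>F - {f0}. face_hessian w d d f)"
    unfolding angle_hessian_def using finite_faces f0(1) by (simp add: sum.remove)
  ultimately show ?thesis
    by linarith
qed

lemma linear_angle_form: "linear (angle_form w)"
  by (rule linearI) (simp_all add: angle_form_def sum.distrib sum_distrib_left algebra_simps)

lemma continuous_on_cosh_length [continuous_intros]:
  "continuous_on S z \<Longrightarrow> continuous_on S (\<lambda>x. cosh_length (z x) e)"
  unfolding cosh_length_def by (intro continuous_intros)

lemma continuous_on_theta:
  assumes "continuous_on S z" "z ` S \<subseteq> W" "f \<in> F" "k < 3"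
  shows "continuous_on S (\<lambda>x. theta ea eb l0 side (z x) f k)"
proof (rule continuous_on_eq)
  show "continuous_on S (\<lambda>x. hex_side (cosh_length (z x) (side f k))
      (cosh_length (z x) (side f ((k + 1) mod 3))) (cosh_length (z x) (side f ((k + 2) mod 3))))"
    using assms by (intro continuous_on_hex_side continuous_intros) (auto intro!: cosh_length_gt_1 side_in_edges)
  show "hex_side (cosh_length (z x) (side f k))
      (cosh_length (z x) (side f ((k + 1) mod 3))) (cosh_length (z x) (side f ((k + 2) mod 3)))
      = theta ea eb l0 side (z x) f k" if "x \<in> S" for x
    using assms that by (auto simp: theta_eq_hex_side)
qed

lemma continuous_on_angle_form: "continuous_on (W \<times> UNIV) (\<lambda>(w, h). angle_form w h)"
  unfolding angle_form_def split_beta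
  by (intro continuous_intros continuous_on_theta) auto

lemma continuous_on_angle_hessian: "continuous_on (W \<times> UNIV \<times> UNIV) (\<lambda>(w, d, h). angle_hessian w d h)"
proof -
  have C: "cosh_length w (side f j) > 1" if "w \<in> W" "f \<in> F" "j < 3" for w f j
    using cosh_length_gt_1[OF that(1) side_in_edges[OF that(2,3)]] .
  then have "cosh_length w (side f j) \<noteq> 1" if "w \<in> W" "f \<in> F" "j < 3" for w f j
    using that by fastforce
  moreover have "hex_discr (cosh_length w (side f 0)) (cosh_length w (side f 1)) (cosh_length w (side f 2)) \<noteq> 0"
    if "w \<in> W" "f \<in> F" for w f
    using hex_discr_pos[OF C[OF that, of 0] C[OF that, of 1] C[OF that, of 2]] by simp
  ultimately show ?thesis
    unfolding angle_hessian_def face_hessian_def Let_def split_beta hex_discr_def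
    by (intro continuous_intros) (auto simp: hex_discr_def)
qed

end

theorem lemma3p2:
  fixes E :: "'e set" and F :: "'f set"
    and ea eb :: "'e \<Rightarrow> 'v::finite"
    and side :: "'f \<Rightarrow> nat \<Rightarrow> 'e" and corner :: "'f \<Rightarrow> nat \<Rightarrow> 'v"
    and l0 :: "'e \<Rightarrow> real" and w0 :: "real^'v"
  assumes "ideal_triangulation E F ea eb side corner"
    and "\<forall>e\<in>E. l0 e > 0"
    and "w0 \<in> Wdom E ea eb l0"
  shows "strictly_convex_on (Wdom E ea eb l0) (Phi F ea eb l0 side corner w0)"
proof -
  interpret ideal_triangulated_surface E F ea eb side corner l0
    by unfold_locales (rule assms(1))
  have Phi_eq: "Phi F ea eb l0 side corner w0 w = - integral {0..1} (\<lambda>t. angle_form (w0 + t *\<^sub>R (w - w0)) (w - w0))"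
    for w
    unfolding Phi_def Bsum_eq_angle_form[symmetric] by simp
  show ?thesis
  proof (rule strictly_convex_onI_second_derivative)
    fix x y :: "real^'v" and s :: real
    assume "x \<in> W" "y \<in> W" "s \<in> {0..1}"
    from radial_integral_has_derivative_along_segment[OF convex_Wdom assms(3) this
        linear_angle_form angle_form_has_derivative angle_hessian_commute
        continuous_on_angle_form continuous_on_angle_hessian]
    show "((\<lambda>s. Phi F ea eb l0 side corner w0 (x + s *\<^sub>R (y - x))) has_real_derivative
        - angle_form (x + s *\<^sub>R (y - x)) (y - x)) (at s within {0..1})"
      unfolding Phi_eq by (rule DERIV_minus)
  next
    fix x y :: "real^'v" and s :: real
    assume "x \<in> W" "y \<in> W" "x \<noteq> y" "s \<in> {0..1}"
    then have "x + s *\<^sub>R (y - x) \<in> W" "y - x \<noteq> 0"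
      by (simp_all add: segment_in_Wdom)
    then show "((\<lambda>s. - angle_form (x + s *\<^sub>R (y - x)) (y - x)) has_real_derivative
        - angle_hessian (x + s *\<^sub>R (y - x)) (y - x) (y - x)) (at s)
      \<and> - angle_hessian (x + s *\<^sub>R (y - x)) (y - x) (y - x) > 0"
      using DERIV_minus[OF angle_form_has_derivative] angle_hessian_neg by simp
  qed
qed

end
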